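(* Let $A\in\mathbb{R}^{m\times n}_+$ with every row containing a positive entry, $n\ge2$, $(r,c)\in\mathbb{R}^m_{+}\times\mathbb{R}^n_{+}$ with $\langle r,1_m\rangle=\langle c,1_n\rangle$, and $y\in\mathbb{R}^n_{++}$. Order the indices so that $c^{A,r}(y)-c$ is non-decreasing, and let $T$ be a prefix set $\{1,\dots,k\}$, $1\le k\le n-1$, with maximum margin $\gamma$ among such prefix sets. Then \[\gamma^2\ge\frac{1}{2n^3}\|c^{A,r}(y)-c\|_2^2.\]
   Context: For $y\in\mathbb{R}^n_{++}$, $c^{A,r}_j(y):=\sum_{i\in[m]}r_i\frac{A_{ij}y_j}{\sum_{k\in[n]}A_{ik}y_k}$. The margin of $T\subseteq[n]$ is the largest $\gamma\ge0$ such that some $\nu\in\mathbb{R}$ satisfies $\max_{j\in T}(c^{A,r}_j(y)-c_j)\le\nu-\gamma\le\nu+\gamma\le\min_{j\notin T}(c^{A,r}_j(y)-c_j)$. *)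

theory Defs
  imports Complex_Main "HOL-Combinatorics.Permutations"
begin

text \<open>Vectors in R^m, R^n are functions nat => real on index sets {..<m}, {..<n};
  the matrix A is a function nat => nat => real on {..<m} x {..<n}.\<close>

definition cAr :: "nat \<Rightarrow> nat \<Rightarrow> (nat \<Rightarrow> nat \<Rightarrow> real) \<Rightarrow> (nat \<Rightarrow> real) \<Rightarrow> (nat \<Rightarrow> real) \<Rightarrow> nat \<Rightarrow> real" where
  "cAr m n A r y j = (\<Sum>i<m. r i * (A i j * y j) / (\<Sum>k<n. A i k * y k))"

definition margin :: "nat \<Rightarrow> (nat \<Rightarrow> real) \<Rightarrow> nat set \<Rightarrow> real" where
  "margin n d T = (GREATEST \<gamma>::real. \<gamma> \<ge> 0 \<and> (\<exists>\<nu>::real.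
       (\<forall>j\<in>T. d j \<le> \<nu> - \<gamma>) \<and> \<nu> - \<gamma> \<le> \<nu> + \<gamma> \<and>
       (\<forall>j\<in>{..<n} - T. \<nu> + \<gamma> \<le> d j)))"

end

theory Submission
  imports Defs
begin

text \<open>Sort \<open>d = c\<^sup>A\<^sup>,\<^sup>r(y) - c\<close> as \<open>e\<^sub>0 \<le> \<dots> \<le> e\<^sub>n\<^sub>-\<^sub>1\<close>. The margin of the prefix of
  length \<open>k\<close> is half the gap \<open>e\<^sub>k - e\<^sub>k\<^sub>-\<^sub>1\<close>, so maximality of \<open>\<gamma>\<close> bounds every
  consecutive gap by \<open>2\<gamma>\<close> and the spread \<open>e\<^sub>n\<^sub>-\<^sub>1 - e\<^sub>0\<close> by \<open>2(n-1)\<gamma>\<close>. The column sums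
  of the scaled matrix \<open>(r\<^sub>i A\<^sub>i\<^sub>j y\<^sub>j / \<langle>A\<^sub>i, y\<rangle>)\<close> are the entries of \<open>c\<^sup>A\<^sup>,\<^sup>r(y)\<close> and
  its row sums are \<open>r\<close>, so \<open>d\<close> sums to zero; a zero-sum vector with entries in an
  interval of length \<open>R\<close> has squared norm at most \<open>n R\<^sup>2/4\<close>.\<close>

lemma margin_sorted_prefix:
  fixes d :: "nat \<Rightarrow> real"
  assumes perm: "\<sigma> permutes {..<n}"
    and sorted: "\<forall>a<n. \<forall>b<n. a \<le> b \<longrightarrow> d (\<sigma> a) \<le> d (\<sigma> b)"
    and k: "1 \<le> k" "k < n"
  shows "margin n d (\<sigma> ` {..<k}) = (d (\<sigma> k) - d (\<sigma> (k - 1))) / 2"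
proof -
  let ?g = "d (\<sigma> k) - d (\<sigma> (k - 1))"
  let ?P = "\<lambda>\<gamma>::real. \<gamma> \<ge> 0 \<and> (\<exists>\<nu>::real.
       (\<forall>j\<in>\<sigma> ` {..<k}. d j \<le> \<nu> - \<gamma>) \<and> \<nu> - \<gamma> \<le> \<nu> + \<gamma> \<and>
       (\<forall>j\<in>{..<n} - \<sigma> ` {..<k}. \<nu> + \<gamma> \<le> d j))"
  have outside: "{..<n} - \<sigma> ` {..<k} = \<sigma> ` {k..<n}"
  proof -
    have "{..<n} = \<sigma> ` ({..<k} \<union> {k..<n})"
      using permutes_image[OF perm] k by (simp add: ivl_disj_un_one(2))
    moreover have "\<sigma> ` {..<k} \<inter> \<sigma> ` {k..<n} = {}"
      using permutes_inj[OF perm] by (auto simp: inj_eq)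
    ultimately show ?thesis by auto
  qed
  let ?\<nu> = "(d (\<sigma> (k - 1)) + d (\<sigma> k)) / 2"
  have lower: "?\<nu> - ?g / 2 = d (\<sigma> (k - 1))" and upper: "?\<nu> + ?g / 2 = d (\<sigma> k)"
    by (simp_all add: field_simps)
  have "?P (?g / 2)"
  proof (intro conjI exI[of _ ?\<nu>] ballI)
    show "0 \<le> ?g / 2" using sorted k by simp
    show "?\<nu> - ?g / 2 \<le> ?\<nu> + ?g / 2" using sorted k unfolding lower upper by simp
  next
    fix j assume "j \<in> \<sigma> ` {..<k}"
    then obtain a where "a < k" "j = \<sigma> a" by auto
    with sorted k show "d j \<le> ?\<nu> - ?g / 2" unfolding lower by simp
  next
    fix j assume "j \<in> {..<n} - \<sigma> ` {..<k}"
    then obtain b where "k \<le> b" "b < n" "j = \<sigma> b" using outside by auto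
    with sorted k show "?\<nu> + ?g / 2 \<le> d j" unfolding upper by simp
  qed
  moreover have "\<gamma> \<le> ?g / 2" if "?P \<gamma>" for \<gamma>
  proof -
    from that obtain \<nu> where "\<forall>j\<in>\<sigma> ` {..<k}. d j \<le> \<nu> - \<gamma>" "\<forall>j\<in>{..<n} - \<sigma> ` {..<k}. \<nu> + \<gamma> \<le> d j"
      by blast
    moreover have "\<sigma> (k - 1) \<in> \<sigma> ` {..<k}" "\<sigma> k \<in> {..<n} - \<sigma> ` {..<k}"
      using k outside by auto
    ultimately have "d (\<sigma> (k - 1)) \<le> \<nu> - \<gamma>" "\<nu> + \<gamma> \<le> d (\<sigma> k)" by blast+
    then show ?thesis by simp
  qed
  ultimately have "(GREATEST \<gamma>. ?P \<gamma>) = ?g / 2" by (intro Greatest_equality)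
  then show ?thesis unfolding margin_def .
qed

lemma sorted_gap_le_max_prefix_margin:
  fixes d :: "nat \<Rightarrow> real"
  assumes perm: "\<sigma> permutes {..<n}"
    and sorted: "\<forall>a<n. \<forall>b<n. a \<le> b \<longrightarrow> d (\<sigma> a) \<le> d (\<sigma> b)"
    and margin_le: "\<forall>k. 1 \<le> k \<and> k \<le> n - 1 \<longrightarrow> margin n d (\<sigma> ` {..<k}) \<le> \<gamma>"
  shows "\<forall>a. Suc a < n \<longrightarrow> d (\<sigma> (Suc a)) - d (\<sigma> a) \<le> 2 * \<gamma>"
proof (intro allI impI)
  fix a assume "Suc a < n"
  with margin_le have "margin n d (\<sigma> ` {..<Suc a}) \<le> \<gamma>" by simp
  with margin_sorted_prefix[OF perm sorted, of "Suc a"] \<open>Suc a < n\<close>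
  show "d (\<sigma> (Suc a)) - d (\<sigma> a) \<le> 2 * \<gamma>" by simp
qed

lemma sum_cAr:
  assumes A_nonneg: "\<forall>i<m. \<forall>j<n. A i j \<ge> 0"
    and A_rows: "\<forall>i<m. \<exists>j<n. A i j > 0"
    and y_pos: "\<forall>j<n. y j > 0"
  shows "(\<Sum>j<n. cAr m n A r y j) = (\<Sum>i<m. r i)"
proof -
  have row_pos: "(\<Sum>k<n. A i k * y k) > 0" if "i < m" for i
  proof -
    obtain j where "j < n" "A i j > 0" using A_rows \<open>i < m\<close> by blast
    then show ?thesis
      by (intro sum_pos2[of _ j]) (use A_nonneg y_pos \<open>i < m\<close> in auto)
  qed
  have "(\<Sum>j<n. cAr m n A r y j) = (\<Sum>i<m. \<Sum>j<n. r i * (A i j * y j) / (\<Sum>k<n. A i k * y k))"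
    unfolding cAr_def by (rule sum.swap)
  also have "\<dots> = (\<Sum>i<m. r i * (\<Sum>j<n. A i j * y j) / (\<Sum>k<n. A i k * y k))"
    by (simp add: sum_divide_distrib sum_distrib_left)
  also have "\<dots> = (\<Sum>i<m. r i)"
  proof (rule sum.cong[OF refl])
    fix i assume "i \<in> {..<m}"
    then have "(\<Sum>k<n. A i k * y k) \<noteq> 0" using row_pos by force
    then show "r i * (\<Sum>j<n. A i j * y j) / (\<Sum>k<n. A i k * y k) = r i" by simp
  qed
  finally show ?thesis .
qed

lemma sum_squares_le_spread:
  fixes f :: "'a \<Rightarrow> real"
  assumes zero_sum: "(\<Sum>x\<in>I. f x) = 0"
    and bounds: "\<forall>x\<in>I. lo \<le> f x \<and> f x \<le> hi"
  shows "(\<Sum>x\<in>I. (f x)\<^sup>2) \<le> real (card I) * (hi - lo)\<^sup>2 / 4"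
proof -
  define M where "M = (lo + hi) / 2"
  have "(\<Sum>x\<in>I. (f x - M)\<^sup>2) = (\<Sum>x\<in>I. (f x)\<^sup>2 - 2 * M * f x + M\<^sup>2)"
    by (simp add: power2_diff algebra_simps)
  also have "\<dots> = (\<Sum>x\<in>I. (f x)\<^sup>2) + real (card I) * M\<^sup>2"
    using zero_sum by (simp add: sum.distrib sum_subtractf flip: sum_distrib_left)
  finally have "(\<Sum>x\<in>I. (f x)\<^sup>2) \<le> (\<Sum>x\<in>I. (f x - M)\<^sup>2)"
    by simp
  also have "\<dots> \<le> (\<Sum>x\<in>I. ((hi - lo) / 2)\<^sup>2)"
  proof (rule sum_mono)
    fix x assume "x \<in> I"
    then have "lo \<le> f x" "f x \<le> hi" using bounds by auto
    then have "\<bar>f x - M\<bar> \<le> (hi - lo) / 2"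
      unfolding M_def by (simp add: abs_le_iff field_simps)
    from power_mono[OF this abs_ge_zero, of 2]
    show "(f x - M)\<^sup>2 \<le> ((hi - lo) / 2)\<^sup>2" by simp
  qed
  also have "\<dots> = real (card I) * (hi - lo)\<^sup>2 / 4"
    by (simp add: power_divide)
  finally show ?thesis .
qed

lemma sum_squares_sorted_le_gap:
  fixes e :: "nat \<Rightarrow> real"
  assumes sorted: "\<forall>a<n. \<forall>b<n. a \<le> b \<longrightarrow> e a \<le> e b"
    and gaps: "\<forall>a. Suc a < n \<longrightarrow> e (Suc a) - e a \<le> g"
    and zero_sum: "(\<Sum>a<n. e a) = 0"
  shows "(\<Sum>a<n. (e a)\<^sup>2) \<le> real n ^ 3 * g\<^sup>2 / 4"
proof (cases "n = 0")
  case False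
  have spread_from_0: "e b - e 0 \<le> real b * g" if "b < n" for b
    using that
  proof (induction b)
    case (Suc b)
    then show ?case using gaps[rule_format, of b] by (simp add: algebra_simps)
  qed simp
  let ?R = "e (n - 1) - e 0"
  have "0 \<le> ?R" "?R \<le> real (n - 1) * g"
    using sorted spread_from_0[of "n - 1"] False by auto
  then have "?R\<^sup>2 \<le> (real (n - 1) * g)\<^sup>2"
    by (simp add: power_mono)
  also have "\<dots> \<le> (real n * g)\<^sup>2"
    by (simp add: power_mult_distrib mult_right_mono power_mono)
  finally have R_sq: "?R\<^sup>2 \<le> (real n * g)\<^sup>2" .
  have "(\<Sum>a<n. (e a)\<^sup>2) \<le> real n * ?R\<^sup>2 / 4"
    using sum_squares_le_spread[OF zero_sum, of "e 0" "e (n - 1)"] sorted by simp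
  also have "\<dots> \<le> real n * (real n * g)\<^sup>2 / 4"
    using R_sq by (simp add: divide_right_mono mult_left_mono)
  finally show ?thesis
    by (simp add: power_mult_distrib power3_eq_cube power2_eq_square mult_ac)
qed simp

theorem proposition6p5:
  fixes m n :: nat and A :: "nat \<Rightarrow> nat \<Rightarrow> real" and r c y :: "nat \<Rightarrow> real"
    and \<sigma> :: "nat \<Rightarrow> nat" and k :: nat
  assumes A_nonneg: "\<forall>i<m. \<forall>j<n. A i j \<ge> 0"
    and A_rows: "\<forall>i<m. \<exists>j<n. A i j > 0"
    and n2: "n \<ge> 2"
    and r_nonneg: "\<forall>i<m. r i \<ge> 0"
    and c_nonneg: "\<forall>j<n. c j \<ge> 0"
    and balance: "(\<Sum>i<m. r i) = (\<Sum>j<n. c j)"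
    and y_pos: "\<forall>j<n. y j > 0"
    and \<sigma>_perm: "\<sigma> permutes {..<n}"
    and \<sigma>_sorted: "\<forall>a<n. \<forall>b<n. a \<le> b \<longrightarrow>
        cAr m n A r y (\<sigma> a) - c (\<sigma> a) \<le> cAr m n A r y (\<sigma> b) - c (\<sigma> b)"
    and k_range: "1 \<le> k" "k \<le> n - 1"
    and k_max: "\<forall>k'. 1 \<le> k' \<and> k' \<le> n - 1 \<longrightarrow>
        margin n (\<lambda>j. cAr m n A r y j - c j) (\<sigma> ` {..<k'})
          \<le> margin n (\<lambda>j. cAr m n A r y j - c j) (\<sigma> ` {..<k})"
  shows "(margin n (\<lambda>j. cAr m n A r y j - c j) (\<sigma> ` {..<k}))\<^sup>2
           \<ge> (\<Sum>j<n. (cAr m n A r y j - c j)\<^sup>2) / (2 * real n ^ 3)"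
proof -
  define d where "d = (\<lambda>j. cAr m n A r y j - c j)"
  define \<gamma> where "\<gamma> = margin n d (\<sigma> ` {..<k})"
  have sorted: "\<forall>a<n. \<forall>b<n. a \<le> b \<longrightarrow> (d \<circ> \<sigma>) a \<le> (d \<circ> \<sigma>) b"
    using \<sigma>_sorted by (simp add: d_def)
  have gaps: "\<forall>a. Suc a < n \<longrightarrow> (d \<circ> \<sigma>) (Suc a) - (d \<circ> \<sigma>) a \<le> 2 * \<gamma>"
    using sorted_gap_le_max_prefix_margin[OF \<sigma>_perm _ k_max[folded d_def]] sorted
    unfolding \<gamma>_def by simp
  have "(\<Sum>a<n. (d \<circ> \<sigma>) a) = (\<Sum>j<n. d j)"
    using sum.permute[OF \<sigma>_perm, of d] by simp
  also have "\<dots> = 0"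
    using sum_cAr[OF A_nonneg A_rows y_pos] balance by (simp add: d_def sum_subtractf)
  finally have zero_sum: "(\<Sum>a<n. (d \<circ> \<sigma>) a) = 0" .
  have "(\<Sum>j<n. (d j)\<^sup>2) = (\<Sum>a<n. ((d \<circ> \<sigma>) a)\<^sup>2)"
    using sum.permute[OF \<sigma>_perm, of "\<lambda>j. (d j)\<^sup>2"] by (simp add: comp_def)
  also have "\<dots> \<le> real n ^ 3 * (2 * \<gamma>)\<^sup>2 / 4"
    by (rule sum_squares_sorted_le_gap[OF sorted gaps zero_sum])
  also have "\<dots> \<le> 2 * real n ^ 3 * \<gamma>\<^sup>2"
    by (simp add: power_mult_distrib)
  finally have "(\<Sum>j<n. (d j)\<^sup>2) / (2 * real n ^ 3) \<le> \<gamma>\<^sup>2"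
    using n2 by (simp add: pos_divide_le_eq mult_ac)
  then show ?thesis
    by (simp add: d_def \<gamma>_def)
qed

end
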